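(* Let $A$ be an associative algebra over a field $\mathbf{k}$ with identity $1$, let $q\in A$ be an idempotent, and let $(A,q):=\{x\in A \mid qxq=qx\}$. For $a\in (A,q)$ let $a_L:(A,q)\to (A,q)$ be left multiplication, $a_L(x):=ax$. Put $W:=(A,q)^{ann}:=\{qx-x\mid x\in (A,q)\}$ and $q_L$ := left multiplication by $q$ on $(A,q)$. Then $q_L$ is a $W$-idempotent of $End((A,q))$, and the map $\phi:(A,q)\to (End((A,q)),q_L)$, $\phi(a)=a_L$, is an injective invariant homomorphism from the invariant algebra $(A,q)$ to the linear invariant algebra $(End((A,q)),q_L)$ over the vector space $(A,q)$ induced by the $W$-idempotent $q_L$.
   Context: All associative algebras have an identity and algebra homomorphisms preserve it. For an associative algebra $A$ with idempotent $q$, the (right) invariant algebra induced by $q$ is $(A,q):=\{x\in A\mid qxq=qx\}$; it is a subalgebra of $A$ containing $1$ and $q$. For a vector space $V$ with subspace $W$, a $W$-idempotent is a linear map $q:V\to V$ with $q(W)=0$ and $q(v)-v\in W$ for all $v\in V$; the linear invariant algebra over $V$ induced by $q$ is $(End(V),q)=\{f\in End(V)\mid qfq=qf\}$ (equivalently, the linear maps $f$ with $f(W)\subseteq W$). For invariant algebras $(A,q_A)$ and $(B,q_B)$, an invariant homomorphism is a linear map $\phi:(A,q_A)\to(B,q_B)$ with $\phi(xy)=\phi(x)\phi(y)$ for all $x,y$, $\phi(1_A)=1_B$ and $\phi(q_A)=q_B$. *)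

theory Defs
  imports Main "HOL.Vector_Spaces" "HOL-Library.FuncSet"
begin

definition is_k_algebra :: "('k::field \<Rightarrow> 'a::ring_1 \<Rightarrow> 'a) \<Rightarrow> bool" where
  "is_k_algebra smul \<longleftrightarrow> vector_space smul \<and>
     (\<forall>c x y. smul c (x * y) = smul c x * y \<and> smul c (x * y) = x * smul c y)"

definition inv_alg :: "'a::ring_1 \<Rightarrow> 'a set" where
  "inv_alg q = {x. q * x * q = q * x}"

definition End_sp :: "('k::field \<Rightarrow> 'a::ab_group_add \<Rightarrow> 'a) \<Rightarrow> 'a set \<Rightarrow> ('a \<Rightarrow> 'a) set" where
  "End_sp smul V = {f. f \<in> V \<rightarrow> V \<and> f \<in> extensional V \<and>
     (\<forall>x\<in>V. \<forall>y\<in>V. f (x + y) = f x + f y) \<and>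
     (\<forall>c. \<forall>x\<in>V. f (smul c x) = smul c (f x))}"

definition end_add :: "'a set \<Rightarrow> ('a \<Rightarrow> 'a::ab_group_add) \<Rightarrow> ('a \<Rightarrow> 'a) \<Rightarrow> ('a \<Rightarrow> 'a)" where
  "end_add V f g = restrict (\<lambda>v. f v + g v) V"

definition end_smul :: "('k \<Rightarrow> 'a \<Rightarrow> 'a) \<Rightarrow> 'a set \<Rightarrow> 'k \<Rightarrow> ('a \<Rightarrow> 'a) \<Rightarrow> ('a \<Rightarrow> 'a)" where
  "end_smul smul V c f = restrict (\<lambda>v. smul c (f v)) V"

definition end_id :: "'a set \<Rightarrow> ('a \<Rightarrow> 'a)" where
  "end_id V = restrict id V"

definition W_idempotent :: "('k::field \<Rightarrow> 'a::ab_group_add \<Rightarrow> 'a) \<Rightarrow> 'a set \<Rightarrow> 'a set \<Rightarrow> ('a \<Rightarrow> 'a) \<Rightarrow> bool" where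
  "W_idempotent smul V W q \<longleftrightarrow> W \<subseteq> V \<and> module.subspace smul W \<and> q \<in> End_sp smul V \<and>
     (\<forall>w\<in>W. q w = 0) \<and> (\<forall>v\<in>V. q v - v \<in> W)"

definition lin_inv_alg :: "('k::field \<Rightarrow> 'a::ab_group_add \<Rightarrow> 'a) \<Rightarrow> 'a set \<Rightarrow> ('a \<Rightarrow> 'a) \<Rightarrow> ('a \<Rightarrow> 'a) set" where
  "lin_inv_alg smul V q = {f \<in> End_sp smul V. compose V q (compose V f q) = compose V q f}"

definition left_mult :: "'a set \<Rightarrow> 'a::ring_1 \<Rightarrow> ('a \<Rightarrow> 'a)" where
  "left_mult S a = restrict (\<lambda>x. a * x) S"

definition inv_hom_to_lin :: "('k::field \<Rightarrow> 'a::ring_1 \<Rightarrow> 'a) \<Rightarrow> 'a \<Rightarrow>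
    ('k \<Rightarrow> 'b::ab_group_add \<Rightarrow> 'b) \<Rightarrow> 'b set \<Rightarrow> ('b \<Rightarrow> 'b) \<Rightarrow> ('a \<Rightarrow> ('b \<Rightarrow> 'b)) \<Rightarrow> bool" where
  "inv_hom_to_lin smulA qA smulB V qB \<phi> \<longleftrightarrow>
     (\<forall>x\<in>inv_alg qA. \<phi> x \<in> lin_inv_alg smulB V qB) \<and>
     (\<forall>x\<in>inv_alg qA. \<forall>y\<in>inv_alg qA. \<phi> (x + y) = end_add V (\<phi> x) (\<phi> y)) \<and>
     (\<forall>c. \<forall>x\<in>inv_alg qA. \<phi> (smulA c x) = end_smul smulB V c (\<phi> x)) \<and>
     (\<forall>x\<in>inv_alg qA. \<forall>y\<in>inv_alg qA. \<phi> (x * y) = compose V (\<phi> x) (\<phi> y)) \<and>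
     \<phi> 1 = end_id V \<and> \<phi> qA = qB"

end

theory Submission
  imports Defs
begin

text \<open>Left multiplication embeds (A,q) into its own endomorphism algebra exactly as in the
  regular representation of a unital algebra. Writing L a for left multiplication by a on (A,q),
  L a sends the unit to a, so L is injective, and composing left multiplications is left
  multiplication by the product. The invariance L q \<circ> L a \<circ> L q = L q \<circ> L a is then just
  qaq = qa transported along L, and L q kills W = {qx - x} because q is idempotent.\<close>

lemma is_k_algebraD:
  assumes "is_k_algebra smul"
  shows "vector_space smul"
    and smul_mult_left: "smul c (x * y) = smul c x * y"
    and smul_mult_right: "smul c (x * y) = x * smul c y"
  using assms unfolding is_k_algebra_def by blast+

lemma inv_alg_iff: "x \<in> inv_alg q \<longleftrightarrow> q * x * q = q * x"
  by (simp add: inv_alg_def)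

lemma zero_in_inv_alg: "0 \<in> inv_alg q"
  by (simp add: inv_alg_iff)

lemma one_in_inv_alg:
  assumes "q * q = q"
  shows "1 \<in> inv_alg q"
  unfolding inv_alg_iff using assms by simp

lemma idempotent_in_inv_alg:
  assumes "q * q = q"
  shows "q \<in> inv_alg q"
  unfolding inv_alg_iff using assms by simp

lemma inv_alg_add: "x \<in> inv_alg q \<Longrightarrow> y \<in> inv_alg q \<Longrightarrow> x + y \<in> inv_alg q"
  by (simp add: inv_alg_iff algebra_simps)

lemma inv_alg_diff: "x \<in> inv_alg q \<Longrightarrow> y \<in> inv_alg q \<Longrightarrow> x - y \<in> inv_alg q"
  by (simp add: inv_alg_iff algebra_simps)

lemma inv_alg_mult:
  assumes "a \<in> inv_alg q" and "x \<in> inv_alg q"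
  shows "a * x \<in> inv_alg q"
proof -
  have "q * (a * x) * q = (q * a * q) * (x * q)" using assms(1) by (simp add: inv_alg_iff mult.assoc)
  also have "\<dots> = q * a * (q * x * q)" by (simp only: mult.assoc)
  also have "\<dots> = q * a * (q * x)" using assms(2) by (simp add: inv_alg_iff)
  also have "\<dots> = (q * a * q) * x" by (simp only: mult.assoc)
  also have "\<dots> = q * (a * x)" using assms(1) by (simp add: inv_alg_iff mult.assoc)
  finally show ?thesis by (simp add: inv_alg_iff)
qed

lemma inv_alg_smul:
  assumes "is_k_algebra smul" and "x \<in> inv_alg q"
  shows "smul c x \<in> inv_alg q"
proof -
  note bil = smul_mult_left[OF assms(1)] smul_mult_right[OF assms(1)]
  have "q * smul c x * q = smul c (q * x * q)" by (metis bil mult.assoc)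
  also have "\<dots> = q * smul c x" using assms(2) by (metis bil inv_alg_iff)
  finally show ?thesis by (simp add: inv_alg_iff)
qed

lemma idempotent_mult_ann:
  fixes q :: "'a::ring"
  assumes "q * q = q"
  shows "q * (q * x - x) = 0"
  using assms by (simp add: right_diff_distrib flip: mult.assoc)

lemma left_mult_add: "left_mult S (a + b) = end_add S (left_mult S a) (left_mult S b)"
  by (auto simp: left_mult_def end_add_def distrib_right)

lemma left_mult_smul:
  "is_k_algebra smul \<Longrightarrow> left_mult S (smul c a) = end_smul smul S c (left_mult S a)"
  by (auto simp: left_mult_def end_smul_def smul_mult_left)

lemma left_mult_one: "left_mult S 1 = end_id S"
  by (auto simp: left_mult_def end_id_def)

lemma left_mult_mult:
  assumes "\<And>x. x \<in> S \<Longrightarrow> b * x \<in> S"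
  shows "left_mult S (a * b) = compose S (left_mult S a) (left_mult S b)"
  using assms by (auto simp: left_mult_def compose_def mult.assoc)

lemma inj_on_left_mult: "1 \<in> S \<Longrightarrow> inj_on (left_mult S) S"
  by (rule inj_onI) (metis left_mult_def mult.right_neutral restrict_apply')

definition inv_alg_ann :: "'a::ring_1 \<Rightarrow> 'a set" where
  "inv_alg_ann q = {q * x - x | x. x \<in> inv_alg q}"

lemma inv_alg_ann_subset: "q * q = q \<Longrightarrow> inv_alg_ann q \<subseteq> inv_alg q"
  by (auto simp: inv_alg_ann_def intro: inv_alg_diff inv_alg_mult idempotent_in_inv_alg)

lemma subspace_inv_alg_ann:
  assumes "is_k_algebra smul"
  shows "module.subspace smul (inv_alg_ann q)"
proof -
  interpret vector_space smul using is_k_algebraD(1)[OF assms] .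
  show ?thesis
    unfolding subspace_def
  proof (intro conjI ballI allI)
    show "0 \<in> inv_alg_ann q"
      unfolding inv_alg_ann_def using zero_in_inv_alg[of q] by (auto intro!: exI[of _ 0])
  next
    fix v w assume "v \<in> inv_alg_ann q" "w \<in> inv_alg_ann q"
    then obtain x y where "x \<in> inv_alg q" "y \<in> inv_alg q" "v = q * x - x" "w = q * y - y"
      by (auto simp: inv_alg_ann_def)
    then have "v + w = q * (x + y) - (x + y)" and "x + y \<in> inv_alg q"
      by (simp_all add: algebra_simps inv_alg_add)
    then show "v + w \<in> inv_alg_ann q"
      unfolding inv_alg_ann_def by blast
  next
    fix c w assume "w \<in> inv_alg_ann q"
    then obtain x where "x \<in> inv_alg q" "w = q * x - x"
      by (auto simp: inv_alg_ann_def)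
    then have "smul c w = q * smul c x - smul c x" and "smul c x \<in> inv_alg q"
      using assms by (simp_all add: scale_right_diff_distrib smul_mult_right inv_alg_smul)
    then show "smul c w \<in> inv_alg_ann q"
      unfolding inv_alg_ann_def by blast
  qed
qed

lemma left_mult_inv_alg_in_End_sp:
  assumes "is_k_algebra smul" and "a \<in> inv_alg q"
  shows "left_mult (inv_alg q) a \<in> End_sp smul (inv_alg q)"
  using assms inv_alg_mult[OF assms(2)] inv_alg_add[of _ q] inv_alg_smul[OF assms(1), of _ q]
  by (auto simp: End_sp_def left_mult_def distrib_left smul_mult_right)

lemma W_idempotent_left_mult_idempotent:
  assumes "is_k_algebra smul" and "q * q = q"
  shows "W_idempotent smul (inv_alg q) (inv_alg_ann q) (left_mult (inv_alg q) q)"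
  unfolding W_idempotent_def
proof (intro conjI ballI)
  show "inv_alg_ann q \<subseteq> inv_alg q" using assms(2) by (rule inv_alg_ann_subset)
  show "module.subspace smul (inv_alg_ann q)" using assms(1) by (rule subspace_inv_alg_ann)
  show "left_mult (inv_alg q) q \<in> End_sp smul (inv_alg q)"
    using assms by (simp add: left_mult_inv_alg_in_End_sp idempotent_in_inv_alg)
next
  fix w assume "w \<in> inv_alg_ann q"
  then show "left_mult (inv_alg q) q w = 0"
    using assms(2) inv_alg_ann_subset[OF assms(2)]
    by (auto simp: inv_alg_ann_def left_mult_def idempotent_mult_ann)
next
  fix v assume "v \<in> inv_alg q"
  then show "left_mult (inv_alg q) q v - v \<in> inv_alg_ann q"
    by (auto simp: left_mult_def inv_alg_ann_def)
qed

lemma left_mult_in_lin_inv_alg: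
  assumes "is_k_algebra smul" and "q * q = q" and "a \<in> inv_alg q"
  shows "left_mult (inv_alg q) a \<in> lin_inv_alg smul (inv_alg q) (left_mult (inv_alg q) q)"
proof -
  let ?L = "left_mult (inv_alg q)"
  have qV: "q \<in> inv_alg q" using assms(2) by (rule idempotent_in_inv_alg)
  have "compose (inv_alg q) (?L q) (compose (inv_alg q) (?L a) (?L q)) = ?L (q * a * q)"
    using qV assms(3) by (simp add: inv_alg_mult left_mult_mult[symmetric] mult.assoc)
  also have "\<dots> = ?L (q * a)" using assms(3) by (simp add: inv_alg_iff)
  also have "\<dots> = compose (inv_alg q) (?L q) (?L a)"
    using assms(3) by (simp add: left_mult_mult inv_alg_mult)
  finally show ?thesis
    unfolding lin_inv_alg_def using left_mult_inv_alg_in_End_sp[OF assms(1,3)] by blast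
qed

lemma inv_hom_left_mult:
  assumes "is_k_algebra smul" and "q * q = q"
  shows "inv_hom_to_lin smul q smul (inv_alg q) (left_mult (inv_alg q) q) (left_mult (inv_alg q))"
  unfolding inv_hom_to_lin_def
  using assms left_mult_in_lin_inv_alg[OF assms]
  by (simp add: left_mult_add left_mult_smul left_mult_one left_mult_mult inv_alg_mult)

theorem proposition1p1:
  fixes smul :: "'k::field \<Rightarrow> 'a::ring_1 \<Rightarrow> 'a" and q :: 'a
  assumes "is_k_algebra smul"
    and "q * q = q"
  defines "W \<equiv> {q * x - x | x. x \<in> inv_alg q}"
  shows "W_idempotent smul (inv_alg q) W (left_mult (inv_alg q) q)
    \<and> inv_hom_to_lin smul q smul (inv_alg q) (left_mult (inv_alg q) q) (left_mult (inv_alg q))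
    \<and> inj_on (left_mult (inv_alg q)) (inv_alg q)"
  using W_idempotent_left_mult_idempotent[OF assms(1,2)] inv_hom_left_mult[OF assms(1,2)]
    inj_on_left_mult[OF one_in_inv_alg[OF assms(2)]]
  unfolding W_def inv_alg_ann_def by blast

end
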